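(* Let $(k_n)$ be a sequence of positive integers with $k_n\ll n$ (i.e. $k_n/n\to0$). Let $G_n$ be the Erdős–Rényi random graph on $\mathcal C^0_n$ with any edge probability $p_n\in(0,1)$ and $R_n$ its associated reaction network. Then there is a constant $c>0$ (independent of $n$) such that for all sufficiently large $n$, \[ \mathbb P(\delta_{R_n}=0\mid R_n\text{ is }k_n\text{-paired})\ge\Big(1-c\frac{k_n^4}{n^4}\Big)\Big(1-\frac{21k_n}{n}\Big). \]
   Context: A reaction network on species $S_1,\dots,S_n$ consists of a finite set $\mathcal R$ of reactions $y\to y'$ where $y\neq y'$ are complexes, i.e. vectors in $\mathbb Z^n_{\ge0}$; $\mathcal C$ is the set of complexes appearing in some reaction. Its graph has vertex set $\mathcal C$ and a directed edge $y\to y'$ for each reaction; $\ell$ denotes the number of connected components of this graph (ignoring edge directions), $s=\dim\operatorname{span}\{y'-y: y\to y'\in\mathcal R\}$, and the deficiency is $\delta=|\mathcal C|-\ell-s$. Let $e_i$ be the $i$-th standard basis vector of $\mathbb Z^n$ and $\mathcal C^0_n=\{0\}\cup\{e_i:1\le i\le n\}\cup\{e_i+e_j:1\le i\le j\le n\}$, so $N_n=|\mathcal C^0_n|=\frac{n^2+3n+2}{2}$. $G_n$ is the Erdős–Rényi random graph on vertex set $\mathcal C^0_n$ in which each of the $\binom{N_n}{2}$ possible undirected edges is present independently with probability $p_n$. The associated reaction network $R_n$ has species $S_1,\dots,S_n$, complex set equal to the set of vertices of $G_n$ of positive degree, and for each edge $\{y,y'\}$ of $G_n$ the two reactions $y\to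 y'$ and $y'\to y$; $\delta_{R_n}$ is its deficiency. A reaction network is paired if each connected component contains exactly two complexes, and $i$-paired if it is paired with exactly $i$ connected components. Conditioned on $R_n$ being $k_n$-paired, $G_n$ is uniformly distributed over all matchings with $k_n$ edges on $\mathcal C^0_n$. *)

theory Defs
  imports "HOL-Analysis.Analysis" "HOL-Library.Function_Algebras"
begin

text \<open>Complexes are vectors in Z_{>=0}^n, represented as functions nat => nat;
  species S_1..S_n correspond to indices 0..n-1.\<close>

definition unitv :: "nat \<Rightarrow> nat \<Rightarrow> nat" where
  "unitv i = (\<lambda>j. if j = i then 1 else 0)"

definition C0 :: "nat \<Rightarrow> (nat \<Rightarrow> nat) set" where
  "C0 n = {\<lambda>_. 0} \<union> {unitv i | i. i < n}
          \<union> {(\<lambda>j. unitv i j + unitv i' j) | i i'. i \<le> i' \<and> i' < n}"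

definition possible_edges :: "nat \<Rightarrow> (nat \<Rightarrow> nat) set set" where
  "possible_edges n = {e. e \<subseteq> C0 n \<and> card e = 2}"

text \<open>Network associated with an edge set E: complexes are the vertices of
  positive degree; reactions y -> y' and y' -> y for each edge {y,y'}.\<close>
definition complexes :: "(nat \<Rightarrow> nat) set set \<Rightarrow> (nat \<Rightarrow> nat) set" where
  "complexes E = \<Union>E"

definition link_rel :: "(nat \<Rightarrow> nat) set set \<Rightarrow> ((nat \<Rightarrow> nat) \<times> (nat \<Rightarrow> nat)) set" where
  "link_rel E = {(x, y). {x, y} \<in> E}"

definition linkage_classes :: "(nat \<Rightarrow> nat) set set \<Rightarrow> (nat \<Rightarrow> nat) set set" where
  "linkage_classes E = complexes E // ((link_rel E)\<^sup>*)"

definition reaction_vectors :: "(nat \<Rightarrow> nat) set set \<Rightarrow> (nat \<Rightarrow> real) set" where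
  "reaction_vectors E =
     {(\<lambda>i. real (y' i) - real (y i)) | y y'. (y, y') \<in> link_rel E}"

definition stoich_dim :: "(nat \<Rightarrow> nat) set set \<Rightarrow> nat" where
  "stoich_dim E = vector_space.dim (\<lambda>(c::real) (f::nat \<Rightarrow> real) i. c * f i) (reaction_vectors E)"

definition deficiency :: "(nat \<Rightarrow> nat) set set \<Rightarrow> int" where
  "deficiency E = int (card (complexes E)) - int (card (linkage_classes E)) - int (stoich_dim E)"

definition paired :: "(nat \<Rightarrow> nat) set set \<Rightarrow> bool" where
  "paired E \<longleftrightarrow> (\<forall>L \<in> linkage_classes E. card L = 2)"

definition i_paired :: "nat \<Rightarrow> (nat \<Rightarrow> nat) set set \<Rightarrow> bool" where
  "i_paired i E \<longleftrightarrow> paired E \<and> card (linkage_classes E) = i"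

definition er_prob :: "nat \<Rightarrow> real \<Rightarrow> (nat \<Rightarrow> nat) set set \<Rightarrow> real" where
  "er_prob n p E = p ^ card E * (1 - p) ^ (card (possible_edges n) - card E)"

definition er_event_prob :: "nat \<Rightarrow> real \<Rightarrow> ((nat \<Rightarrow> nat) set set \<Rightarrow> bool) \<Rightarrow> real" where
  "er_event_prob n p P = (\<Sum>E \<in> {E. E \<subseteq> possible_edges n \<and> P E}. er_prob n p E)"

definition cond_prob_def0_paired :: "nat \<Rightarrow> real \<Rightarrow> nat \<Rightarrow> real" where
  "cond_prob_def0_paired n p k =
     er_event_prob n p (\<lambda>E. deficiency E = 0 \<and> i_paired k E) / er_event_prob n p (i_paired k)"

end

theory Submission
  imports Defs
begin

text \<open>Conditioned on being \<open>k\<close>-paired, the network is a uniformly random matching with \<open>k\<close> edges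
  on \<open>C0 n\<close>. Every set \<open>U\<close> of \<open>2k\<close> complexes carries the same number of perfect matchings, so the
  conditional probability is at least the fraction of such \<open>U\<close> that are peelable: every nonempty
  subfamily has a species occurring in exactly one of its members. On a peelable vertex set the
  reaction vectors of a matching can be peeled off one coordinate at a time, so they are linearly
  independent, \<open>s = k\<close>, and the deficiency is \<open>2k - k - k = 0\<close>. A non-peelable \<open>U\<close> either contains
  one of the \<open>2n + 1\<close> complexes \<open>0\<close>, \<open>e\<^sub>i\<close>, \<open>2e\<^sub>i\<close>, or contains \<open>s \<ge> 3\<close> complexes \<open>e\<^sub>a + e\<^sub>b\<close>
  involving only \<open>s\<close> species; a union bound shows that these make up at most a fraction \<open>21k/n\<close>
  of all \<open>U\<close> once \<open>1000k \<le> n\<close>. Hence the bound holds with \<open>c = 1\<close>, the factor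
  \<open>1 - c k\<^sup>4/n\<^sup>4\<close> being at most \<open>1\<close>.\<close>

section \<open>Peelable families are linearly independent\<close>

interpretation real_fun: vector_space "\<lambda>(c::real) (f::'a \<Rightarrow> real) i. c * f i"
  by unfold_locales (auto simp: fun_eq_iff algebra_simps)

definition peelable :: "('a \<Rightarrow> 'b::zero) set \<Rightarrow> bool" where
  "peelable S \<longleftrightarrow> (\<forall>T\<subseteq>S. T \<noteq> {} \<longrightarrow> (\<exists>i. card {v\<in>T. v i \<noteq> 0} = 1))"

lemma peelableI:
  "(\<And>T. T \<subseteq> S \<Longrightarrow> T \<noteq> {} \<Longrightarrow> \<exists>i. card {v\<in>T. v i \<noteq> 0} = 1) \<Longrightarrow> peelable S"
  unfolding peelable_def by blast

lemma peelable_subset: "peelable S \<Longrightarrow> T \<subseteq> S \<Longrightarrow> peelable T"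
  unfolding peelable_def by blast

lemma span_coordinate_zero:
  assumes "x \<in> real_fun.span S" and "\<forall>v\<in>S. v i = 0"
  shows "x i = 0"
proof -
  have "real_fun.subspace {f. f i = 0}"
    unfolding real_fun.subspace_def by simp
  with assms show ?thesis
    using real_fun.span_induct[of x S "\<lambda>f. f i = 0"] by auto
qed

lemma peelable_independent:
  fixes S :: "('a \<Rightarrow> real) set"
  assumes "finite S" and "peelable S"
  shows "real_fun.independent S"
  using assms
proof (induction "card S" arbitrary: S rule: less_induct)
  case less
  show ?case
  proof (cases "S = {}")
    case False
    then obtain i where "card {v\<in>S. v i \<noteq> 0} = 1"
      using less.prems(2) unfolding peelable_def by blast
    then obtain x where x: "{v\<in>S. v i \<noteq> 0} = {x}" by (rule card_1_singletonE)
    then have "x \<in> S" and "x i \<noteq> 0" by auto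
    have "card (S - {x}) < card S" using less.prems(1) \<open>x \<in> S\<close> by (rule card_Diff1_less)
    then have "real_fun.independent (S - {x})"
      using less.hyps less.prems peelable_subset[of S "S - {x}"] by simp
    moreover have "x \<notin> real_fun.span (S - {x})"
      using span_coordinate_zero[of x "S - {x}" i] x \<open>x i \<noteq> 0\<close> by blast
    ultimately have "real_fun.independent (insert x (S - {x}))"
      by (rule real_fun.independent_insertI[rotated])
    then show ?thesis using \<open>x \<in> S\<close> by (simp add: insert_absorb)
  qed (simp add: real_fun.independent_empty)
qed

section \<open>Paired networks are matchings\<close>

lemma finite_C0: "finite (C0 n)"
proof -
  have "{(\<lambda>j. unitv i j + unitv i' j) | i i'. i \<le> i' \<and> i' < n}
      \<subseteq> (\<lambda>(i, i'). (\<lambda>j. unitv i j + unitv i' j)) ` ({..<n} \<times> {..<n})"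
    by auto
  then have "finite {(\<lambda>j. unitv i j + unitv i' j) | i i'. i \<le> i' \<and> i' < n}"
    by (rule finite_subset) simp
  moreover have "{unitv i | i. i < n} = unitv ` {..<n}" by blast
  ultimately show ?thesis unfolding C0_def by simp
qed

lemma finite_possible_edges: "finite (possible_edges n)"
  by (rule finite_subset[of _ "Pow (C0 n)"]) (auto simp: possible_edges_def finite_C0)

lemma possible_edgesD:
  assumes "E \<subseteq> possible_edges n"
  shows "\<forall>e\<in>E. card e = 2" and "\<Union>E \<subseteq> C0 n"
  using assms unfolding possible_edges_def by auto

lemma edge_subset_linkage_class:
  assumes "\<forall>e\<in>E. card e = 2" and "e \<in> E" and "x \<in> e"
  shows "e \<subseteq> (link_rel E)\<^sup>* `` {x}"
proof
  fix z assume "z \<in> e"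
  show "z \<in> (link_rel E)\<^sup>* `` {x}"
  proof (cases "z = x")
    case False
    from assms(1,2) obtain a b where "e = {a, b}" by (auto simp: card_2_iff)
    with assms(3) \<open>z \<in> e\<close> False have "e = {x, z}" by auto
    then have "(x, z) \<in> link_rel E" using assms(2) unfolding link_rel_def by simp
    then show ?thesis by auto
  qed simp
qed

lemma linkage_class_subset_complexes:
  assumes "x \<in> complexes E"
  shows "(link_rel E)\<^sup>* `` {x} \<subseteq> complexes E"
proof
  fix z assume "z \<in> (link_rel E)\<^sup>* `` {x}"
  then have "(x, z) \<in> (link_rel E)\<^sup>*" by simp
  then show "z \<in> complexes E"
  proof (induction rule: rtrancl_induct)
    case (step y z)
    then show ?case unfolding link_rel_def complexes_def by auto
  qed (use assms in simp)
qed

lemma linkage_class_matching: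
  assumes "disjoint E" and "\<forall>e\<in>E. card e = 2" and "e \<in> E" and "x \<in> e"
  shows "(link_rel E)\<^sup>* `` {x} = e"
proof
  show "(link_rel E)\<^sup>* `` {x} \<subseteq> e"
  proof
    fix z assume "z \<in> (link_rel E)\<^sup>* `` {x}"
    then have "(x, z) \<in> (link_rel E)\<^sup>*" by simp
    then show "z \<in> e"
    proof (induction rule: rtrancl_induct)
      case (step y z)
      then have "{y, z} \<in> E" and "{y, z} \<inter> e \<noteq> {}" unfolding link_rel_def by auto
      with disjointD[OF assms(1) _ assms(3)] have "{y, z} = e" by blast
      then show ?case by blast
    qed (use assms(4) in simp)
  qed
  show "e \<subseteq> (link_rel E)\<^sup>* `` {x}"
    using edge_subset_linkage_class[OF assms(2-4)] .
qed

lemma linkage_classes_matching: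
  assumes "disjoint E" and "\<forall>e\<in>E. card e = 2"
  shows "linkage_classes E = E"
  unfolding linkage_classes_def complexes_def
proof
  show "\<Union>E // (link_rel E)\<^sup>* \<subseteq> E"
  proof
    fix L assume "L \<in> \<Union>E // (link_rel E)\<^sup>*"
    then obtain e x where "e \<in> E" "x \<in> e" "L = (link_rel E)\<^sup>* `` {x}"
      by (auto elim: quotientE)
    then show "L \<in> E" using linkage_class_matching[OF assms] by simp
  qed
  show "E \<subseteq> \<Union>E // (link_rel E)\<^sup>*"
  proof
    fix e assume "e \<in> E"
    then obtain x where "x \<in> e" using assms(2) by (fastforce simp: card_2_iff)
    then have "(link_rel E)\<^sup>* `` {x} \<in> \<Union>E // (link_rel E)\<^sup>*"
      using \<open>e \<in> E\<close> by (auto intro: quotientI)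
    then show "e \<in> \<Union>E // (link_rel E)\<^sup>*"
      using linkage_class_matching[OF assms \<open>e \<in> E\<close> \<open>x \<in> e\<close>] by simp
  qed
qed

lemma paired_disjoint:
  assumes E: "E \<subseteq> possible_edges n" and "paired E"
  shows "disjoint E"
proof (rule disjointI)
  fix e f assume "e \<in> E" "f \<in> E" "e \<noteq> f"
  show "e \<inter> f = {}"
  proof (rule ccontr)
    assume "e \<inter> f \<noteq> {}"
    then obtain x where x: "x \<in> e" "x \<in> f" by blast
    have c2: "card e = 2" "card f = 2" "\<forall>e\<in>E. card e = 2"
      using possible_edgesD(1)[OF E] \<open>e \<in> E\<close> \<open>f \<in> E\<close> by auto
    let ?L = "(link_rel E)\<^sup>* `` {x}"
    have "x \<in> complexes E" using x \<open>e \<in> E\<close> unfolding complexes_def by blast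
    then have "?L \<in> linkage_classes E"
      unfolding linkage_classes_def by (rule quotientI)
    then have "card ?L = 2" using \<open>paired E\<close> unfolding paired_def by blast
    have "finite ?L"
      using linkage_class_subset_complexes[OF \<open>x \<in> complexes E\<close>] possible_edgesD(2)[OF E]
        finite_C0 unfolding complexes_def by (meson finite_subset)
    have "e \<union> f \<subseteq> ?L"
      using edge_subset_linkage_class[OF c2(3)] \<open>e \<in> E\<close> \<open>f \<in> E\<close> x by blast
    moreover have "\<not> f \<subseteq> e"
      using card_subset_eq[of e f] c2(1,2) \<open>e \<noteq> f\<close> by (metis card.infinite zero_neq_numeral)
    ultimately have "e \<subset> ?L" by blast
    then have "card e < card ?L" using \<open>finite ?L\<close> by (rule psubset_card_mono[rotated])
    then show False using c2(1) \<open>card ?L = 2\<close> by simp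
  qed
qed

lemma i_paired_iff_disjoint:
  assumes "E \<subseteq> possible_edges n"
  shows "i_paired k E \<longleftrightarrow> disjoint E \<and> card E = k"
proof
  assume "i_paired k E"
  then have "disjoint E" and "card (linkage_classes E) = k"
    using paired_disjoint[OF assms] unfolding i_paired_def by auto
  then show "disjoint E \<and> card E = k"
    using linkage_classes_matching possible_edgesD(1)[OF assms] by simp
next
  assume "disjoint E \<and> card E = k"
  then show "i_paired k E"
    using linkage_classes_matching possible_edgesD(1)[OF assms]
    unfolding i_paired_def paired_def by simp
qed

section \<open>Matchings on a peelable vertex set have deficiency zero\<close>

lemma card_Union_matching:
  assumes "disjoint E" and "\<forall>e\<in>E. card e = 2"
  shows "card (\<Union>E) = 2 * card E"
proof -
  have "card (\<Union>E) = sum card E"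
    using assms by (intro card_Union_disjoint) (auto simp: disjoint_def pairwise_def disjnt_def
      intro: card_ge_0_finite)
  then show ?thesis using assms(2) by simp
qed

lemma peelable_Union_matching_coordinate:
  fixes A B :: "('a \<Rightarrow> 'b::zero) set \<Rightarrow> 'a \<Rightarrow> 'b"
  assumes "disjoint E" and "peelable (\<Union>E)"
    and AB: "\<And>e. e \<in> E \<Longrightarrow> e = {A e, B e} \<and> A e \<noteq> B e"
    and "T \<subseteq> E" and "T \<noteq> {}"
  shows "\<exists>i. \<exists>e0\<in>T. A e0 i \<noteq> B e0 i \<and> (\<forall>e\<in>T - {e0}. A e i = 0 \<and> B e i = 0)"
proof -
  obtain e where "e \<in> T" using \<open>T \<noteq> {}\<close> by blast
  then have "A e \<in> \<Union>T" using AB assms(4) by blast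
  then have "\<Union>T \<subseteq> \<Union>E" and "\<Union>T \<noteq> {}" using assms(4) by auto
  then obtain i where "card {y\<in>\<Union>T. y i \<noteq> 0} = 1"
    using \<open>peelable (\<Union>E)\<close> unfolding peelable_def by blast
  then obtain z where z: "{y\<in>\<Union>T. y i \<noteq> 0} = {z}" by (rule card_1_singletonE)
  have zero: "w i = 0" if "w \<in> \<Union>T" "w \<noteq> z" for w
  proof (rule ccontr)
    assume "w i \<noteq> 0"
    with that(1) have "w \<in> {y\<in>\<Union>T. y i \<noteq> 0}" by simp
    with z that(2) show False by simp
  qed
  obtain e0 where "e0 \<in> T" "z \<in> e0" "z i \<noteq> 0" using z by blast
  have "e0 \<in> E" using \<open>e0 \<in> T\<close> assms(4) by blast
  have "A e0 \<in> \<Union>T" "B e0 \<in> \<Union>T" "z = A e0 \<or> z = B e0"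
    using AB[OF \<open>e0 \<in> E\<close>] \<open>e0 \<in> T\<close> \<open>z \<in> e0\<close> by auto
  then have "A e0 i \<noteq> B e0 i"
    using \<open>z i \<noteq> 0\<close> zero[of "A e0"] zero[of "B e0"] AB[OF \<open>e0 \<in> E\<close>] by auto
  moreover have "A e i = 0 \<and> B e i = 0" if "e \<in> T - {e0}" for e
  proof -
    have "e \<in> E" "e \<inter> e0 = {}" using that \<open>e0 \<in> E\<close> \<open>e0 \<in> T\<close> assms(1,4) unfolding disjoint_def by auto
    then have "A e \<noteq> z" "B e \<noteq> z" "A e \<in> \<Union>T" "B e \<in> \<Union>T"
      using AB[of e] that \<open>z \<in> e0\<close> by auto
    then show ?thesis using zero by simp
  qed
  ultimately show ?thesis using \<open>e0 \<in> T\<close> by blast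
qed

lemma peelable_edge_vectors:
  fixes A B :: "('a \<Rightarrow> nat) set \<Rightarrow> 'a \<Rightarrow> nat"
  defines "edge_vec \<equiv> \<lambda>e i. real (B e i) - real (A e i)"
  assumes "disjoint E" and "peelable (\<Union>E)"
    and AB: "\<And>e. e \<in> E \<Longrightarrow> e = {A e, B e} \<and> A e \<noteq> B e"
  shows "inj_on edge_vec E" and "peelable (edge_vec ` E)"
proof -
  have coordinate: "\<exists>i. \<exists>e0\<in>T. edge_vec e0 i \<noteq> 0 \<and> (\<forall>e\<in>T - {e0}. edge_vec e i = 0)"
    if T: "T \<subseteq> E" "T \<noteq> {}" for T
  proof -
    obtain i e0 where "e0 \<in> T" "A e0 i \<noteq> B e0 i" "\<forall>e\<in>T - {e0}. A e i = 0 \<and> B e i = 0"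
      using peelable_Union_matching_coordinate[OF assms(2,3) AB T] by blast
    then show ?thesis unfolding edge_vec_def by (intro exI[of _ i] bexI[of _ e0]) auto
  qed
  show "inj_on edge_vec E"
  proof (rule inj_onI, rule ccontr)
    fix e f assume "e \<in> E" "f \<in> E" "edge_vec e = edge_vec f" "e \<noteq> f"
    then obtain i e0 where "e0 \<in> {e, f}" "edge_vec e0 i \<noteq> 0" "\<forall>g\<in>{e, f} - {e0}. edge_vec g i = 0"
      using coordinate[of "{e, f}"] by blast
    moreover have "edge_vec e i = edge_vec f i" using \<open>edge_vec e = edge_vec f\<close> by simp
    ultimately show False using \<open>e \<noteq> f\<close> by (cases "e0 = e") auto
  qed
  show "peelable (edge_vec ` E)"
  proof (rule peelableI)
    fix T assume "T \<subseteq> edge_vec ` E" "T \<noteq> {}"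
    define T0 where "T0 = {e\<in>E. edge_vec e \<in> T}"
    have "T = edge_vec ` T0" and "T0 \<subseteq> E" using \<open>T \<subseteq> edge_vec ` E\<close> unfolding T0_def by blast+
    moreover from this have "T0 \<noteq> {}" using \<open>T \<noteq> {}\<close> by blast
    ultimately obtain i e0 where "e0 \<in> T0" "edge_vec e0 i \<noteq> 0" "\<forall>e\<in>T0 - {e0}. edge_vec e i = 0"
      using coordinate[of T0] by blast
    then have "{v\<in>T. v i \<noteq> 0} = {edge_vec e0}" using \<open>T = edge_vec ` T0\<close> by auto
    then have "card {v\<in>T. v i \<noteq> 0} = 1" by simp
    then show "\<exists>i. card {v\<in>T. v i \<noteq> 0} = 1" ..
  qed
qed

lemma stoich_dim_peelable_matching:
  assumes E: "E \<subseteq> possible_edges n" and "disjoint E" and "peelable (\<Union>E)"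
  shows "stoich_dim E = card E"
proof -
  have "finite E" using E finite_possible_edges by (rule finite_subset)
  have "\<forall>e\<in>E. \<exists>a b. e = {a, b} \<and> a \<noteq> b"
    using possible_edgesD(1)[OF E] by (auto simp: card_2_iff)
  then obtain A B where AB: "\<And>e. e \<in> E \<Longrightarrow> e = {A e, B e} \<and> A e \<noteq> B e"
    by metis
  define edge_vec where "edge_vec e = (\<lambda>i. real (B e i) - real (A e i))" for e
  have "inj_on edge_vec E" and "peelable (edge_vec ` E)"
    using peelable_edge_vectors[OF assms(2,3) AB] unfolding edge_vec_def by simp_all
  then have "real_fun.independent (edge_vec ` E)"
    using \<open>finite E\<close> by (simp add: peelable_independent)
  moreover have "edge_vec ` E \<subseteq> reaction_vectors E"
  proof
    fix v assume "v \<in> edge_vec ` E"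
    then obtain e where "e \<in> E" "v = edge_vec e" by blast
    then have "(A e, B e) \<in> link_rel E" using AB unfolding link_rel_def by auto
    then show "v \<in> reaction_vectors E" unfolding reaction_vectors_def \<open>v = edge_vec e\<close> edge_vec_def by blast
  qed
  moreover have "reaction_vectors E \<subseteq> real_fun.span (edge_vec ` E)"
  proof
    fix r assume "r \<in> reaction_vectors E"
    then obtain y y' where r: "r = (\<lambda>i. real (y' i) - real (y i))" and "{y, y'} \<in> E"
      unfolding reaction_vectors_def link_rel_def by auto
    then have "edge_vec {y, y'} \<in> real_fun.span (edge_vec ` E)" by (intro real_fun.span_base) auto
    moreover have "r = edge_vec {y, y'} \<or> r = - edge_vec {y, y'}"
      using AB[OF \<open>{y, y'} \<in> E\<close>] unfolding r edge_vec_def by (auto simp: doubleton_eq_iff fun_eq_iff)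
    ultimately show "r \<in> real_fun.span (edge_vec ` E)" using real_fun.span_neg by auto
  qed
  ultimately show ?thesis
    unfolding stoich_dim_def using real_fun.basis_card_eq_dim card_image[OF \<open>inj_on edge_vec E\<close>] by metis
qed

lemma deficiency_peelable_matching:
  assumes E: "E \<subseteq> possible_edges n" and "disjoint E" and "peelable (\<Union>E)"
  shows "deficiency E = 0"
  using stoich_dim_peelable_matching[OF assms] card_Union_matching[OF assms(2)]
    linkage_classes_matching[OF assms(2)] possible_edgesD(1)[OF E]
  unfolding deficiency_def complexes_def by simp

section \<open>Counting matchings by their vertex set\<close>

definition perfect_matchings :: "'a set \<Rightarrow> 'a set set set" where
  "perfect_matchings U = {M. disjoint M \<and> (\<forall>e\<in>M. card e = 2) \<and> \<Union>M = U}"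

lemma finite_perfect_matchings: "finite U \<Longrightarrow> finite (perfect_matchings U)"
  by (rule finite_subset[of _ "Pow (Pow U)"]) (auto simp: perfect_matchings_def)

lemma image_perfect_matching:
  assumes "inj_on g U" and "M \<in> perfect_matchings U"
  shows "(`) g ` M \<in> perfect_matchings (g ` U)"
proof -
  have M: "disjoint M" "\<forall>e\<in>M. card e = 2" "\<Union>M = U"
    using assms(2) unfolding perfect_matchings_def by auto
  have "disjoint ((`) g ` M)" using assms(1) M(1,3) by (intro disjoint_image) simp_all
  moreover have "card (g ` e) = 2" if "e \<in> M" for e
  proof -
    have "e \<subseteq> U" using that M(3) by blast
    then have "card (g ` e) = card e" by (rule card_image[OF inj_on_subset[OF assms(1)]])
    then show ?thesis using that M(2) by simp
  qed
  moreover have "\<Union>((`) g ` M) = g ` U" using M(3) by blast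
  ultimately show ?thesis unfolding perfect_matchings_def by blast
qed

lemma card_perfect_matchings_le:
  assumes "inj_on g U" and "finite U"
  shows "card (perfect_matchings U) \<le> card (perfect_matchings (g ` U))"
proof (rule card_inj_on_le)
  have "inj_on ((`) ((`) g)) (Pow (Pow U))"
    by (intro inj_on_image_Pow assms(1))
  moreover have "perfect_matchings U \<subseteq> Pow (Pow U)"
    unfolding perfect_matchings_def by blast
  ultimately show "inj_on ((`) ((`) g)) (perfect_matchings U)"
    by (rule inj_on_subset)
  show "(`) ((`) g) ` perfect_matchings U \<subseteq> perfect_matchings (g ` U)"
    using image_perfect_matching[OF assms(1)] by blast
  show "finite (perfect_matchings (g ` U))"
    using assms(2) by (simp add: finite_perfect_matchings)
qed

lemma card_perfect_matchings_eq:
  assumes "finite U" and "finite U'" and "card U = card U'"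
  shows "card (perfect_matchings U) = card (perfect_matchings U')"
proof -
  obtain g where "bij_betw g U U'" using finite_same_card_bij[OF assms] by blast
  then have "bij_betw (the_inv_into U g) U' U" by (rule bij_betw_the_inv_into)
  have "card (perfect_matchings U) \<le> card (perfect_matchings U')"
    using card_perfect_matchings_le[OF _ assms(1), of g] \<open>bij_betw g U U'\<close>
    unfolding bij_betw_def by simp
  moreover have "card (perfect_matchings U') \<le> card (perfect_matchings U)"
    using card_perfect_matchings_le[OF _ assms(2), of "the_inv_into U g"]
      \<open>bij_betw (the_inv_into U g) U' U\<close>
    unfolding bij_betw_def by simp
  ultimately show ?thesis by (rule antisym)
qed

lemma perfect_matchings_nonempty:
  assumes "finite U" and "card U = 2 * j"
  shows "perfect_matchings U \<noteq> {}"
  using assms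
proof (induction j arbitrary: U)
  case 0
  then have "{} \<in> perfect_matchings U" unfolding perfect_matchings_def by simp
  then show ?case by blast
next
  case (Suc j)
  then have "card U \<ge> 2" by simp
  then obtain a b where ab: "a \<in> U" "b \<in> U" "a \<noteq> b"
    by (metis One_nat_def Suc_1 card_le_Suc_iff numeral_2_eq_2 insertCI)
  have "card (U - {a, b}) = 2 * j" using Suc.prems ab by (simp add: card_Diff_subset)
  with Suc.IH Suc.prems(1) obtain M where "M \<in> perfect_matchings (U - {a, b})" by blast
  then have M: "disjoint M" "\<forall>e\<in>M. card e = 2" "\<Union>M = U - {a, b}"
    unfolding perfect_matchings_def by auto
  have "disjoint (insert {a, b} M)"
  proof (rule disjointI)
    fix x y assume "x \<in> insert {a, b} M" "y \<in> insert {a, b} M" "x \<noteq> y"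
    moreover have "{a, b} \<inter> e = {}" if "e \<in> M" for e
      using that M(3) by blast
    ultimately show "x \<inter> y = {}"
      using disjointD[OF M(1)] by (metis Int_commute insertE)
  qed
  moreover have "\<Union>(insert {a, b} M) = U" using ab M(3) by blast
  moreover have "\<forall>e\<in>insert {a, b} M. card e = 2" using ab M(2) by simp
  ultimately have "insert {a, b} M \<in> perfect_matchings U"
    unfolding perfect_matchings_def by blast
  then show ?case by blast
qed

lemma matchings_by_vertex_set:
  "{E. E \<subseteq> {e. e \<subseteq> V \<and> card e = 2} \<and> disjoint E \<and> card E = k \<and> Q (\<Union>E)}
     = (\<Union>U\<in>{U. U \<subseteq> V \<and> card U = 2 * k \<and> Q U}. perfect_matchings U)"
proof (intro equalityI subsetI)
  fix E assume "E \<in> {E. E \<subseteq> {e. e \<subseteq> V \<and> card e = 2} \<and> disjoint E \<and> card E = k \<and> Q (\<Union>E)}"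
  then have E: "\<forall>e\<in>E. e \<subseteq> V \<and> card e = 2" "disjoint E" "card E = k" "Q (\<Union>E)"
    by blast+
  then have "card (\<Union>E) = 2 * k" using card_Union_matching[of E] by simp
  moreover have "\<Union>E \<subseteq> V" using E(1) by blast
  ultimately have "\<Union>E \<in> {U. U \<subseteq> V \<and> card U = 2 * k \<and> Q U}" using E(4) by simp
  moreover have "E \<in> perfect_matchings (\<Union>E)" using E unfolding perfect_matchings_def by simp
  ultimately show "E \<in> (\<Union>U\<in>{U. U \<subseteq> V \<and> card U = 2 * k \<and> Q U}. perfect_matchings U)"
    by (rule UN_I)
next
  fix E assume "E \<in> (\<Union>U\<in>{U. U \<subseteq> V \<and> card U = 2 * k \<and> Q U}. perfect_matchings U)"
  then obtain U where "U \<in> {U. U \<subseteq> V \<and> card U = 2 * k \<and> Q U}" and "E \<in> perfect_matchings U"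
    by (rule UN_E)
  then have U: "U \<subseteq> V" "card U = 2 * k" "Q U" and "E \<in> perfect_matchings U" by simp_all
  then have E: "disjoint E" "\<forall>e\<in>E. card e = 2" "\<Union>E = U"
    unfolding perfect_matchings_def by simp_all
  then have "card E = k" using card_Union_matching[of E] U(2) by simp
  moreover have "E \<subseteq> {e. e \<subseteq> V \<and> card e = 2}" using E U(1) by blast
  ultimately show "E \<in> {E. E \<subseteq> {e. e \<subseteq> V \<and> card e = 2} \<and> disjoint E \<and> card E = k \<and> Q (\<Union>E)}"
    using E U(3) by simp
qed

lemma card_matchings_by_vertex_set:
  assumes "finite V"
  shows "card {E. E \<subseteq> {e. e \<subseteq> V \<and> card e = 2} \<and> disjoint E \<and> card E = k \<and> Q (\<Union>E)}
       = card {U. U \<subseteq> V \<and> card U = 2 * k \<and> Q U} * card (perfect_matchings {..<2 * k})"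
proof -
  define S where "S = {U. U \<subseteq> V \<and> card U = 2 * k \<and> Q U}"
  have finite_S: "finite S"
    by (rule finite_subset[of _ "Pow V"]) (auto simp: S_def assms)
  have finite_members: "finite U" if "U \<in> S" for U
    using that unfolding S_def by (blast intro: finite_subset[OF _ assms])
  have "card {E. E \<subseteq> {e. e \<subseteq> V \<and> card e = 2} \<and> disjoint E \<and> card E = k \<and> Q (\<Union>E)}
      = card (\<Union>U\<in>S. perfect_matchings U)"
    unfolding S_def by (simp only: matchings_by_vertex_set[of V k Q])
  also have "\<dots> = (\<Sum>U\<in>S. card (perfect_matchings U))"
  proof (rule card_UN_disjoint[OF finite_S])
    show "\<forall>U\<in>S. finite (perfect_matchings U)"
      using finite_members finite_perfect_matchings by blast
    show "\<forall>U\<in>S. \<forall>U'\<in>S. U \<noteq> U' \<longrightarrow> perfect_matchings U \<inter> perfect_matchings U' = {}"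
      unfolding perfect_matchings_def by blast
  qed
  also have "\<dots> = (\<Sum>U\<in>S. card (perfect_matchings {..<2 * k}))"
  proof (rule sum.cong[OF refl])
    fix U assume "U \<in> S"
    then show "card (perfect_matchings U) = card (perfect_matchings {..<2 * k})"
      using finite_members[OF \<open>U \<in> S\<close>] by (intro card_perfect_matchings_eq) (simp_all add: S_def)
  qed
  also have "\<dots> = card S * card (perfect_matchings {..<2 * k})" by simp
  finally show ?thesis unfolding S_def .
qed

text \<open>All edge sets with \<open>k\<close> edges have the same Erdos-Renyi weight, so both probabilities
  are counts of matchings times that weight.\<close>

lemma er_prob_card:
  "card E = k \<Longrightarrow> er_prob n p E = p ^ k * (1 - p) ^ (card (possible_edges n) - k)"
  unfolding er_prob_def by simp

lemma er_event_prob_i_paired: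
  "er_event_prob n p (i_paired k)
     = real (card {E. E \<subseteq> possible_edges n \<and> disjoint E \<and> card E = k})
       * (p ^ k * (1 - p) ^ (card (possible_edges n) - k))"
proof -
  let ?D = "{E. E \<subseteq> possible_edges n \<and> disjoint E \<and> card E = k}"
  have "{E. E \<subseteq> possible_edges n \<and> i_paired k E} = ?D"
    using i_paired_iff_disjoint[where n = n] by (intro Collect_cong) auto
  then have "er_event_prob n p (i_paired k) = (\<Sum>E\<in>?D. er_prob n p E)"
    unfolding er_event_prob_def by simp
  also have "\<dots> = (\<Sum>E\<in>?D. p ^ k * (1 - p) ^ (card (possible_edges n) - k))"
    by (rule sum.cong[OF refl]) (simp add: er_prob_card)
  finally show ?thesis by simp
qed

lemma er_event_prob_deficiency_zero_ge:
  assumes "0 \<le> p" and "p \<le> 1"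
  shows "real (card {E. E \<subseteq> possible_edges n \<and> disjoint E \<and> card E = k \<and> peelable (\<Union>E)})
           * (p ^ k * (1 - p) ^ (card (possible_edges n) - k))
         \<le> er_event_prob n p (\<lambda>E. deficiency E = 0 \<and> i_paired k E)"
proof -
  let ?G = "{E. E \<subseteq> possible_edges n \<and> disjoint E \<and> card E = k \<and> peelable (\<Union>E)}"
  let ?A = "{E. E \<subseteq> possible_edges n \<and> deficiency E = 0 \<and> i_paired k E}"
  have "?G \<subseteq> ?A"
  proof
    fix E assume "E \<in> ?G"
    then have "E \<subseteq> possible_edges n" "disjoint E" "card E = k" "peelable (\<Union>E)" by simp_all
    then show "E \<in> ?A" using deficiency_peelable_matching i_paired_iff_disjoint by simp
  qed
  moreover have "finite ?A"
    by (rule finite_subset[of _ "Pow (possible_edges n)"]) (auto simp: finite_possible_edges)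
  ultimately have "(\<Sum>E\<in>?G. er_prob n p E) \<le> er_event_prob n p (\<lambda>E. deficiency E = 0 \<and> i_paired k E)"
    unfolding er_event_prob_def using assms by (intro sum_mono2) (auto simp: er_prob_def)
  moreover have "(\<Sum>E\<in>?G. er_prob n p E) = (\<Sum>E\<in>?G. p ^ k * (1 - p) ^ (card (possible_edges n) - k))"
    by (rule sum.cong[OF refl]) (simp add: er_prob_card)
  ultimately show ?thesis by simp
qed

lemma cond_prob_ge_peelable_fraction:
  assumes "0 < p" and "p < 1" and "2 * k \<le> card (C0 n)"
  shows "real (card {U. U \<subseteq> C0 n \<and> card U = 2 * k \<and> peelable U})
           / real (card {U. U \<subseteq> C0 n \<and> card U = 2 * k})
         \<le> cond_prob_def0_paired n p k"
proof -
  define q where "q = p ^ k * (1 - p) ^ (card (possible_edges n) - k)"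
  define pm where "pm = card (perfect_matchings {..<2 * k})"
  define D where "D = {E. E \<subseteq> possible_edges n \<and> disjoint E \<and> card E = k}"
  define G where "G = {E. E \<subseteq> possible_edges n \<and> disjoint E \<and> card E = k \<and> peelable (\<Union>E)}"
  have "q > 0" unfolding q_def using assms(1,2) by simp
  have "pm > 0"
    unfolding pm_def using perfect_matchings_nonempty[of "{..<2 * k}" k]
    by (simp add: card_gt_0_iff finite_perfect_matchings)
  have "card {U. U \<subseteq> C0 n \<and> card U = 2 * k} > 0"
    using assms(3) by (simp add: n_subsets finite_C0)
  have card_D: "card D = card {U. U \<subseteq> C0 n \<and> card U = 2 * k} * pm"
    and card_G: "card G = card {U. U \<subseteq> C0 n \<and> card U = 2 * k \<and> peelable U} * pm"
    unfolding D_def G_def pm_def possible_edges_def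
    using card_matchings_by_vertex_set[OF finite_C0, where Q = "\<lambda>_. True"]
      card_matchings_by_vertex_set[OF finite_C0, where Q = peelable] by simp_all
  have "real (card {U. U \<subseteq> C0 n \<and> card U = 2 * k \<and> peelable U})
          / real (card {U. U \<subseteq> C0 n \<and> card U = 2 * k})
        = (real (card G) * q) / (real (card D) * q)"
    using \<open>pm > 0\<close> \<open>q > 0\<close> unfolding card_G card_D by simp
  also have "\<dots> \<le> cond_prob_def0_paired n p k"
    unfolding cond_prob_def0_paired_def er_event_prob_i_paired
    using er_event_prob_deficiency_zero_ge[of p n k] assms(1,2) \<open>q > 0\<close>
    unfolding D_def G_def q_def by (intro divide_right_mono) simp_all
  finally show ?thesis .
qed

section \<open>The complexes of \<open>C0 n\<close>\<close>

text \<open>The complexes \<open>e\<^sub>a + e\<^sub>b\<close> with \<open>a \<noteq> b\<close> both in \<open>W\<close>, as indicator functions of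
  two-element sets.\<close>

definition pair_complexes :: "nat set \<Rightarrow> (nat \<Rightarrow> nat) set" where
  "pair_complexes W = (\<lambda>S j. of_bool (j \<in> S)) ` {S. S \<subseteq> W \<and> card S = 2}"

lemma inj_indicator: "inj (\<lambda>S j. (of_bool (j \<in> S) :: nat))"
proof (rule injI)
  fix S S' :: "'a set"
  assume "(\<lambda>j. (of_bool (j \<in> S) :: nat)) = (\<lambda>j. of_bool (j \<in> S'))"
  then show "S = S'" by (simp add: fun_eq_iff set_eq_iff of_bool_eq_iff)
qed

lemma unitv_add_unitv: "a \<noteq> b \<Longrightarrow> (\<lambda>j. unitv a j + unitv b j) = (\<lambda>j. of_bool (j \<in> {a, b}))"
  by (auto simp: unitv_def fun_eq_iff)

lemma pair_complexes_mono: "W \<subseteq> W' \<Longrightarrow> pair_complexes W \<subseteq> pair_complexes W'"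
  unfolding pair_complexes_def by blast

lemma finite_pair_complexes: "finite W \<Longrightarrow> finite (pair_complexes W)"
  unfolding pair_complexes_def by (rule finite_imageI) (rule finite_subset[of _ "Pow W"], auto)

lemma card_pair_complexes:
  assumes "finite W"
  shows "card (pair_complexes W) = card W choose 2"
  unfolding pair_complexes_def
  using card_image[OF inj_on_subset[OF inj_indicator, of "{S. S \<subseteq> W \<and> card S = 2}"]]
    n_subsets[OF assms] by simp

lemma pair_complexes_subset_C0: "pair_complexes {..<n} \<subseteq> C0 n"
proof
  fix y assume "y \<in> pair_complexes {..<n}"
  then obtain S where "S \<subseteq> {..<n}" "card S = 2" "y = (\<lambda>j. of_bool (j \<in> S))"
    unfolding pair_complexes_def by blast
  moreover obtain a b where "S = {a, b}" "a < b"
    using \<open>card S = 2\<close> by (metis card_2_iff insert_commute linorder_neq_iff)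
  ultimately have "y = (\<lambda>j. unitv a j + unitv b j)" "a \<le> b" "b < n"
    using unitv_add_unitv[of a b] by auto
  then show "y \<in> C0 n" unfolding C0_def by blast
qed

lemma card_C0_ge: "n choose 2 \<le> card (C0 n)"
  using card_mono[OF finite_C0 pair_complexes_subset_C0, of n] card_pair_complexes[of "{..<n}"]
  by simp

lemma C0_diff_pair_complexes:
  "C0 n - pair_complexes {..<n}
     \<subseteq> {\<lambda>_. 0} \<union> unitv ` {..<n} \<union> (\<lambda>i j. unitv i j + unitv i j) ` {..<n}"
proof
  fix y assume y: "y \<in> C0 n - pair_complexes {..<n}"
  then consider "y = (\<lambda>_. 0)" | i where "i < n" "y = unitv i"
    | i i' where "i \<le> i'" "i' < n" "y = (\<lambda>j. unitv i j + unitv i' j)"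
    unfolding C0_def by blast
  then show "y \<in> {\<lambda>_. 0} \<union> unitv ` {..<n} \<union> (\<lambda>i j. unitv i j + unitv i j) ` {..<n}"
  proof cases
    case (3 i i')
    have "i = i'"
    proof (rule ccontr)
      assume "i \<noteq> i'"
      then have "y = (\<lambda>j. of_bool (j \<in> {i, i'}))" using 3 unitv_add_unitv by simp
      moreover have "{i, i'} \<subseteq> {..<n}" "card {i, i'} = 2" using 3 \<open>i \<noteq> i'\<close> by auto
      ultimately have "y \<in> pair_complexes {..<n}" unfolding pair_complexes_def by blast
      with y show False by simp
    qed
    with 3 show ?thesis by simp
  qed simp_all
qed

lemma card_C0_diff_pair_complexes: "card (C0 n - pair_complexes {..<n}) \<le> 2 * n + 1"
proof -
  let ?Z = "{\<lambda>_. 0} :: (nat \<Rightarrow> nat) set"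
  let ?D = "(\<lambda>i j. unitv i j + unitv i j) ` {..<n}"
  have "card (C0 n - pair_complexes {..<n}) \<le> card (?Z \<union> unitv ` {..<n} \<union> ?D)"
    by (rule card_mono[OF _ C0_diff_pair_complexes]) simp
  also have "\<dots> \<le> card ?Z + card (unitv ` {..<n}) + card ?D"
    using card_Un_le[of "?Z \<union> unitv ` {..<n}" ?D] card_Un_le[of ?Z "unitv ` {..<n}"] by linarith
  also have "\<dots> \<le> 1 + n + n"
    using card_image_le[of "{..<n}" unitv] card_image_le[of "{..<n}" "\<lambda>i j. unitv i j + unitv i j"]
    by simp
  finally show ?thesis by simp
qed

section \<open>Non-peelable sets of pair complexes contain a dense core\<close>

lemma card_support_Union_le:
  fixes T :: "('a \<Rightarrow> 'b::zero) set"
  assumes "finite T"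
    and two: "\<And>y. y \<in> T \<Longrightarrow> card {i. y i \<noteq> 0} = 2"
    and not_one: "\<And>i. card {y\<in>T. y i \<noteq> 0} \<noteq> 1"
  shows "card {i. \<exists>y\<in>T. y i \<noteq> 0} \<le> card T"
proof -
  define sp where "sp = {i. \<exists>y\<in>T. y i \<noteq> 0}"
  have "sp = (\<Union>y\<in>T. {i. y i \<noteq> 0})" unfolding sp_def by blast
  then have "finite sp"
    using assms(1) two by (metis (no_types, lifting) card.infinite finite_UN_I zero_neq_numeral)
  have "2 * card sp = (\<Sum>i\<in>sp. 2)" by simp
  also have "\<dots> \<le> (\<Sum>i\<in>sp. card (T \<inter> {y. y i \<noteq> 0}))"
  proof (rule sum_mono)
    fix i assume "i \<in> sp"
    then have "T \<inter> {y. y i \<noteq> 0} \<noteq> {}" unfolding sp_def by blast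
    then have "card (T \<inter> {y. y i \<noteq> 0}) \<noteq> 0" using assms(1) by simp
    moreover have "card (T \<inter> {y. y i \<noteq> 0}) \<noteq> 1" using not_one[of i] by (simp add: Int_def)
    ultimately show "2 \<le> card (T \<inter> {y. y i \<noteq> 0})" by linarith
  qed
  also have "\<dots> = (\<Sum>i\<in>sp. \<Sum>y\<in>T. of_bool (y i \<noteq> 0))"
    using assms(1) by simp
  also have "\<dots> = (\<Sum>y\<in>T. \<Sum>i\<in>sp. of_bool (y i \<noteq> 0))"
    by (rule sum.swap)
  also have "\<dots> = (\<Sum>y\<in>T. card (sp \<inter> {i. y i \<noteq> 0}))"
    using \<open>finite sp\<close> by simp
  also have "\<dots> = (\<Sum>y\<in>T. 2)"
  proof (rule sum.cong[OF refl])
    fix y assume "y \<in> T"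
    then have "sp \<inter> {i. y i \<noteq> 0} = {i. y i \<noteq> 0}" unfolding sp_def by blast
    then show "card (sp \<inter> {i. y i \<noteq> 0}) = 2" using two[OF \<open>y \<in> T\<close>] by simp
  qed
  also have "\<dots> = 2 * card T" by simp
  finally show ?thesis unfolding sp_def by simp
qed

lemma pair_complexes_support:
  assumes "T \<subseteq> pair_complexes W"
  shows "T \<subseteq> pair_complexes {i. \<exists>y\<in>T. y i \<noteq> 0}" and "{i. \<exists>y\<in>T. y i \<noteq> 0} \<subseteq> W"
proof -
  have pair: "\<exists>S. S \<subseteq> W \<and> card S = 2 \<and> y = (\<lambda>j. of_bool (j \<in> S))" if "y \<in> T" for y
    using that assms unfolding pair_complexes_def by blast
  show "{i. \<exists>y\<in>T. y i \<noteq> 0} \<subseteq> W" using pair by fastforce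
  show "T \<subseteq> pair_complexes {i. \<exists>y\<in>T. y i \<noteq> 0}"
  proof
    fix y assume "y \<in> T"
    with pair obtain S where "card S = 2" "y = (\<lambda>j. of_bool (j \<in> S))" by blast
    moreover have "S \<subseteq> {i. \<exists>y\<in>T. y i \<noteq> 0}"
    proof
      fix x assume "x \<in> S"
      then have "y x \<noteq> 0" using \<open>y = (\<lambda>j. of_bool (j \<in> S))\<close> by simp
      then show "x \<in> {i. \<exists>y\<in>T. y i \<noteq> 0}" using \<open>y \<in> T\<close> by blast
    qed
    ultimately show "y \<in> pair_complexes {i. \<exists>y\<in>T. y i \<noteq> 0}" unfolding pair_complexes_def by blast
  qed
qed

lemma three_le_card_pair_complexes:
  assumes "finite W" and "T \<subseteq> pair_complexes W" and "card W \<le> card T" and "T \<noteq> {}"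
  shows "3 \<le> card T"
proof -
  have "card T \<le> card (pair_complexes W)"
    by (rule card_mono[OF finite_pair_complexes[OF assms(1)] assms(2)])
  also have "\<dots> \<le> card T choose 2"
    using card_pair_complexes[OF assms(1)] binomial_right_mono[OF assms(3)] by simp
  finally have "card T \<notin> {0, 1, 2}"
    using assms(1,2,4) finite_pair_complexes finite_subset by (fastforce simp: numeral_2_eq_2)
  then show ?thesis by auto
qed

text \<open>The core \<open>T\<close> is a subfamily with no species occurring exactly once; each of its species
  then occurs at least twice, which forces at most \<open>card T\<close> species. Padding them gives \<open>W\<close>.\<close>

lemma not_peelable_dense_core:
  assumes U: "U \<subseteq> pair_complexes {..<n}" "finite U" "card U \<le> n" and "\<not> peelable U"
  shows "\<exists>T W. T \<subseteq> U \<and> W \<subseteq> {..<n} \<and> card W = card T \<and> T \<subseteq> pair_complexes W \<and> 3 \<le> card T"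
proof -
  obtain T where T: "T \<subseteq> U" "T \<noteq> {}" "\<And>i. card {y\<in>T. y i \<noteq> 0} \<noteq> 1"
    using \<open>\<not> peelable U\<close> unfolding peelable_def by blast
  define sp where "sp = {i. \<exists>y\<in>T. y i \<noteq> 0}"
  have "finite T" using T(1) U(2) by (rule finite_subset)
  have "T \<subseteq> pair_complexes {..<n}" using T(1) U(1) by blast
  then have "T \<subseteq> pair_complexes sp" and "sp \<subseteq> {..<n}"
    unfolding sp_def by (rule pair_complexes_support)+
  then have "finite sp" by (simp add: finite_subset)
  have "card {i. y i \<noteq> 0} = 2" if "y \<in> T" for y
    using that \<open>T \<subseteq> pair_complexes sp\<close> unfolding pair_complexes_def by auto
  then have "card sp \<le> card T"
    unfolding sp_def by (rule card_support_Union_le[OF \<open>finite T\<close> _ T(3)])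
  moreover have "card T \<le> card {..<n}" using card_mono[OF U(2) T(1)] U(3) by simp
  ultimately obtain W where W: "sp \<subseteq> W" "W \<subseteq> {..<n}" "card W = card T"
    using exists_subset_between[OF _ _ \<open>sp \<subseteq> {..<n}\<close>] by (metis finite_lessThan)
  have "3 \<le> card T"
    using three_le_card_pair_complexes[OF \<open>finite sp\<close> \<open>T \<subseteq> pair_complexes sp\<close> \<open>card sp \<le> card T\<close> T(2)] .
  moreover have "T \<subseteq> pair_complexes W"
    using \<open>T \<subseteq> pair_complexes sp\<close> pair_complexes_mono[OF W(1)] by blast
  ultimately show ?thesis using T(1) W(2,3) by blast
qed

section \<open>Counting non-peelable vertex sets\<close>

lemma card_supersets:
  assumes "finite V" and "T \<subseteq> V" and "card T \<le> m"
  shows "card {U. U \<subseteq> V \<and> card U = m \<and> T \<subseteq> U} = (card V - card T) choose (m - card T)"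
proof -
  have "finite T" using assms(1,2) by (rule finite_subset[rotated])
  have "bij_betw (\<lambda>U. U - T) {U. U \<subseteq> V \<and> card U = m \<and> T \<subseteq> U}
          {X. X \<subseteq> V - T \<and> card X = m - card T}"
  proof (rule bij_betwI[where g = "\<lambda>X. X \<union> T"])
    show "(\<lambda>U. U - T) \<in> {U. U \<subseteq> V \<and> card U = m \<and> T \<subseteq> U} \<rightarrow> {X. X \<subseteq> V - T \<and> card X = m - card T}"
      using \<open>finite T\<close> by (auto simp: card_Diff_subset)
    show "(\<lambda>X. X \<union> T) \<in> {X. X \<subseteq> V - T \<and> card X = m - card T} \<rightarrow> {U. U \<subseteq> V \<and> card U = m \<and> T \<subseteq> U}"
    proof
      fix X assume X: "X \<in> {X. X \<subseteq> V - T \<and> card X = m - card T}"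
      then have "finite X" using finite_subset[OF _ assms(1), of X] by blast
      then have "card (X \<union> T) = card X + card T"
        using X \<open>finite T\<close> by (intro card_Un_disjoint) auto
      then show "X \<union> T \<in> {U. U \<subseteq> V \<and> card U = m \<and> T \<subseteq> U}" using X assms(2,3) by auto
    qed
  qed auto
  then have "card {U. U \<subseteq> V \<and> card U = m \<and> T \<subseteq> U} = card {X. X \<subseteq> V - T \<and> card X = m - card T}"
    by (rule bij_betw_same_card)
  also have "\<dots> = (card V - card T) choose (m - card T)"
    using assms \<open>finite T\<close> by (simp add: n_subsets card_Diff_subset)
  finally show ?thesis .
qed

lemma card_subsets_not_pair_complexes:
  assumes "1 \<le> m"
  shows "card {U. U \<subseteq> C0 n \<and> card U = m \<and> \<not> U \<subseteq> pair_complexes {..<n}}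
           \<le> (2 * n + 1) * ((card (C0 n) - 1) choose (m - 1))"
proof -
  let ?S = "C0 n - pair_complexes {..<n}"
  let ?X = "\<lambda>y. {U. U \<subseteq> C0 n \<and> card U = m \<and> {y} \<subseteq> U}"
  have "{U. U \<subseteq> C0 n \<and> card U = m \<and> \<not> U \<subseteq> pair_complexes {..<n}} \<subseteq> (\<Union>y\<in>?S. ?X y)"
    by blast
  then have "card {U. U \<subseteq> C0 n \<and> card U = m \<and> \<not> U \<subseteq> pair_complexes {..<n}}
      \<le> card (\<Union>y\<in>?S. ?X y)"
    by (rule card_mono[rotated]) (rule finite_subset[of _ "Pow (C0 n)"], auto simp: finite_C0)
  also have "\<dots> \<le> (\<Sum>y\<in>?S. card (?X y))"
    by (rule card_UN_le) (simp add: finite_C0)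
  also have "\<dots> = (\<Sum>y\<in>?S. (card (C0 n) - 1) choose (m - 1))"
  proof (rule sum.cong[OF refl])
    fix y assume "y \<in> ?S"
    then show "card (?X y) = (card (C0 n) - 1) choose (m - 1)"
      using card_supersets[OF finite_C0[of n], of "{y}" m] assms by simp
  qed
  also have "\<dots> = card ?S * ((card (C0 n) - 1) choose (m - 1))" by simp
  also have "\<dots> \<le> (2 * n + 1) * ((card (C0 n) - 1) choose (m - 1))"
    using card_C0_diff_pair_complexes[of n] by (rule mult_right_mono) simp
  finally show ?thesis .
qed

lemma card_supersets_of_pair_family:
  assumes "W \<subseteq> {..<n}" and "card W = s" and "s \<le> m"
  shows "card (\<Union>T\<in>{T. T \<subseteq> pair_complexes W \<and> card T = s}. {U. U \<subseteq> C0 n \<and> card U = m \<and> T \<subseteq> U})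
           \<le> ((s choose 2) choose s) * ((card (C0 n) - s) choose (m - s))"
proof -
  let ?Ts = "{T. T \<subseteq> pair_complexes W \<and> card T = s}"
  have "finite W" using assms(1) finite_subset[of W "{..<n}"] by simp
  then have "finite ?Ts"
    by (intro finite_subset[of _ "Pow (pair_complexes W)", OF _ finite_Pow_iff[THEN iffD2]])
      (auto simp: finite_pair_complexes)
  then have "card (\<Union>T\<in>?Ts. {U. U \<subseteq> C0 n \<and> card U = m \<and> T \<subseteq> U})
      \<le> (\<Sum>T\<in>?Ts. card {U. U \<subseteq> C0 n \<and> card U = m \<and> T \<subseteq> U})"
    by (rule card_UN_le)
  also have "\<dots> = (\<Sum>T\<in>?Ts. (card (C0 n) - s) choose (m - s))"
  proof (rule sum.cong[OF refl])
    fix T assume "T \<in> ?Ts"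
    then have "T \<subseteq> C0 n" "card T = s"
      using pair_complexes_mono[OF assms(1)] pair_complexes_subset_C0[of n] by auto
    then show "card {U. U \<subseteq> C0 n \<and> card U = m \<and> T \<subseteq> U} = (card (C0 n) - s) choose (m - s)"
      using card_supersets[OF finite_C0[of n], of T m] assms(3) by simp
  qed
  also have "\<dots> = ((s choose 2) choose s) * ((card (C0 n) - s) choose (m - s))"
    using \<open>finite W\<close> assms(2) by (simp add: n_subsets finite_pair_complexes card_pair_complexes)
  finally show ?thesis .
qed

lemma card_subsets_with_dense_core:
  "card {U. U \<subseteq> C0 n \<and> card U = m \<and> (\<exists>T W. T \<subseteq> U \<and> W \<subseteq> {..<n} \<and> card W = card T
            \<and> T \<subseteq> pair_complexes W \<and> 3 \<le> card T)}
     \<le> (\<Sum>s=3..m. (n choose s) * (((s choose 2) choose s) * ((card (C0 n) - s) choose (m - s))))"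
proof -
  define X where "X T = {U. U \<subseteq> C0 n \<and> card U = m \<and> T \<subseteq> U}" for T
  define Ws where "Ws s = {W. W \<subseteq> {..<n} \<and> card W = s}" for s
  define Ts where "Ts W s = {T. T \<subseteq> pair_complexes W \<and> card T = s}" for W s
  have "{U. U \<subseteq> C0 n \<and> card U = m \<and> (\<exists>T W. T \<subseteq> U \<and> W \<subseteq> {..<n} \<and> card W = card T
            \<and> T \<subseteq> pair_complexes W \<and> 3 \<le> card T)}
      \<subseteq> (\<Union>s\<in>{3..m}. \<Union>W\<in>Ws s. \<Union>T\<in>Ts W s. X T)"
  proof
    fix U assume "U \<in> {U. U \<subseteq> C0 n \<and> card U = m \<and> (\<exists>T W. T \<subseteq> U \<and> W \<subseteq> {..<n}
        \<and> card W = card T \<and> T \<subseteq> pair_complexes W \<and> 3 \<le> card T)}"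
    then obtain T W where U: "U \<subseteq> C0 n" "card U = m" and TW: "T \<subseteq> U" "W \<subseteq> {..<n}"
      "card W = card T" "T \<subseteq> pair_complexes W" "3 \<le> card T" by blast
    have "card T \<le> m"
      using card_mono[OF finite_subset[OF U(1) finite_C0] TW(1)] U(2) by simp
    then have "card T \<in> {3..m}" "W \<in> Ws (card T)" "T \<in> Ts W (card T)" "U \<in> X T"
      using U TW unfolding X_def Ws_def Ts_def by simp_all
    then show "U \<in> (\<Union>s\<in>{3..m}. \<Union>W\<in>Ws s. \<Union>T\<in>Ts W s. X T)" by blast
  qed
  then have "card {U. U \<subseteq> C0 n \<and> card U = m \<and> (\<exists>T W. T \<subseteq> U \<and> W \<subseteq> {..<n} \<and> card W = card T
            \<and> T \<subseteq> pair_complexes W \<and> 3 \<le> card T)}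
      \<le> card (\<Union>s\<in>{3..m}. \<Union>W\<in>Ws s. \<Union>T\<in>Ts W s. X T)"
    by (rule card_mono[rotated]) (rule finite_subset[of _ "Pow (C0 n)"], auto simp: finite_C0 X_def)
  also have "\<dots> \<le> (\<Sum>s=3..m. \<Sum>W\<in>Ws s. card (\<Union>T\<in>Ts W s. X T))"
  proof (rule order.trans[OF card_UN_le sum_mono])
    fix s
    have "finite (Ws s)" unfolding Ws_def by (rule finite_subset[of _ "Pow {..<n}"]) auto
    then show "card (\<Union>W\<in>Ws s. \<Union>T\<in>Ts W s. X T) \<le> (\<Sum>W\<in>Ws s. card (\<Union>T\<in>Ts W s. X T))"
      by (rule card_UN_le)
  qed simp
  also have "\<dots> \<le> (\<Sum>s=3..m. card (Ws s) * (((s choose 2) choose s) * ((card (C0 n) - s) choose (m - s))))"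
  proof (rule sum_mono)
    fix s assume "s \<in> {3..m}"
    then have "card (\<Union>T\<in>Ts W s. X T) \<le> ((s choose 2) choose s) * ((card (C0 n) - s) choose (m - s))"
      if "W \<in> Ws s" for W
      using card_supersets_of_pair_family[of W n s m] that unfolding Ws_def Ts_def X_def by simp
    then show "(\<Sum>W\<in>Ws s. card (\<Union>T\<in>Ts W s. X T))
        \<le> card (Ws s) * (((s choose 2) choose s) * ((card (C0 n) - s) choose (m - s)))"
      by (metis (no_types, lifting) of_nat_id sum_bounded_above)
  qed
  also have "\<dots> = (\<Sum>s=3..m. (n choose s) * (((s choose 2) choose s) * ((card (C0 n) - s) choose (m - s))))"
    unfolding Ws_def by (simp add: n_subsets)
  finally show ?thesis .
qed

lemma card_not_peelable_le:
  assumes "1 \<le> m" and "m \<le> n"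
  shows "card {U. U \<subseteq> C0 n \<and> card U = m \<and> \<not> peelable U}
           \<le> (2 * n + 1) * ((card (C0 n) - 1) choose (m - 1))
             + (\<Sum>s=3..m. (n choose s) * (((s choose 2) choose s) * ((card (C0 n) - s) choose (m - s))))"
proof -
  have "{U. U \<subseteq> C0 n \<and> card U = m \<and> \<not> peelable U}
      \<subseteq> {U. U \<subseteq> C0 n \<and> card U = m \<and> \<not> U \<subseteq> pair_complexes {..<n}}
        \<union> {U. U \<subseteq> C0 n \<and> card U = m \<and> (\<exists>T W. T \<subseteq> U \<and> W \<subseteq> {..<n} \<and> card W = card T
              \<and> T \<subseteq> pair_complexes W \<and> 3 \<le> card T)}"
  proof
    fix U assume U: "U \<in> {U. U \<subseteq> C0 n \<and> card U = m \<and> \<not> peelable U}"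
    show "U \<in> {U. U \<subseteq> C0 n \<and> card U = m \<and> \<not> U \<subseteq> pair_complexes {..<n}}
        \<union> {U. U \<subseteq> C0 n \<and> card U = m \<and> (\<exists>T W. T \<subseteq> U \<and> W \<subseteq> {..<n} \<and> card W = card T
              \<and> T \<subseteq> pair_complexes W \<and> 3 \<le> card T)}"
    proof (cases "U \<subseteq> pair_complexes {..<n}")
      case True
      moreover have "finite U" "card U \<le> n" "\<not> peelable U"
        using U finite_subset[OF _ finite_C0, of U n] assms(2) by auto
      ultimately show ?thesis using not_peelable_dense_core[of U n] U by blast
    qed (use U in blast)
  qed
  then have "card {U. U \<subseteq> C0 n \<and> card U = m \<and> \<not> peelable U}
      \<le> card {U. U \<subseteq> C0 n \<and> card U = m \<and> \<not> U \<subseteq> pair_complexes {..<n}}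
        + card {U. U \<subseteq> C0 n \<and> card U = m \<and> (\<exists>T W. T \<subseteq> U \<and> W \<subseteq> {..<n} \<and> card W = card T
              \<and> T \<subseteq> pair_complexes W \<and> 3 \<le> card T)}"
    by (intro order.trans[OF card_mono card_Un_le])
      (rule finite_subset[of _ "Pow (C0 n)"], auto simp: finite_C0)
  then show ?thesis
    using card_subsets_not_pair_complexes[OF assms(1), of n] card_subsets_with_dense_core[of n m]
    by linarith
qed

section \<open>Binomial estimates\<close>

lemma Suc_mult_binomial_Suc: "Suc s * (n choose Suc s) = (n - s) * (n choose s)"
  using binomial_absorption[of s n] binomial_absorb_comp[of n s] by simp

lemma two_mult_choose_two: "2 * (n choose 2) = n * (n - 1)"
  using Suc_mult_binomial_Suc[of 1 n] by (simp add: numeral_2_eq_2 mult.commute)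

lemma binomial_mult_power_le:
  assumes "m \<le> N"
  shows "(m choose s) * N ^ s \<le> (N choose s) * m ^ s"
proof (induction s)
  case (Suc s)
  have "(m - s) * N \<le> (N - s) * m"
  proof (cases "s \<le> m")
    case True
    then have "(m - s) * N = m * N - s * N" by (simp add: diff_mult_distrib)
    also have "\<dots> \<le> m * N - s * m" using assms by (intro diff_le_mono2) simp
    also have "\<dots> = (N - s) * m" by (simp add: diff_mult_distrib algebra_simps)
    finally show ?thesis .
  qed simp
  have "Suc s * ((m choose Suc s) * N ^ Suc s) = (Suc s * (m choose Suc s)) * (N ^ s * N)"
    by (simp only: power_Suc2 mult_ac)
  also have "\<dots> = ((m - s) * N) * ((m choose s) * N ^ s)"
    by (simp only: Suc_mult_binomial_Suc mult_ac)
  also have "\<dots> \<le> ((N - s) * m) * ((N choose s) * m ^ s)"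
    using \<open>(m - s) * N \<le> (N - s) * m\<close> Suc.IH by (rule mult_mono) simp_all
  also have "\<dots> = (Suc s * (N choose Suc s)) * (m ^ s * m)"
    by (simp only: Suc_mult_binomial_Suc mult_ac)
  also have "\<dots> = Suc s * ((N choose Suc s) * m ^ Suc s)"
    by (simp only: power_Suc2 mult_ac)
  finally show ?case by (simp only: mult_le_cancel1)
qed simp

lemma binomial_diff_le:
  assumes "s \<le> m" and "m \<le> N" and "0 < N"
  shows "real ((N - s) choose (m - s)) \<le> real (N choose m) * (real m / real N) ^ s"
proof -
  have "real (N choose s) * (real ((N - s) choose (m - s)) * real N ^ s)
      = real (N choose m) * (real (m choose s) * real N ^ s)"
    using arg_cong[OF choose_mult[OF assms(1,2)], of real] by (simp add: algebra_simps)
  also have "\<dots> \<le> real (N choose m) * (real (N choose s) * real m ^ s)"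
    using binomial_mult_power_le[OF assms(2), of s]
    by (intro mult_left_mono) (simp_all flip: of_nat_mult of_nat_power)
  finally have "real ((N - s) choose (m - s)) * real N ^ s \<le> real (N choose m) * real m ^ s"
    using assms by (simp add: algebra_simps)
  then show ?thesis using assms(3) by (simp add: field_simps power_divide)
qed

lemma power_le_exp_mult_fact:
  fixes x :: real
  assumes "0 \<le> x"
  shows "x ^ n \<le> exp x * fact n"
proof -
  have "(\<lambda>n. x ^ n / fact n) sums exp x"
    using exp_converges[of x] by (simp add: divide_inverse mult.commute scaleR_conv_of_real)
  then have "x ^ n / fact n \<le> exp x"
    using sum_le_suminf[of "\<lambda>n. x ^ n / fact n" "{n}"] assms by (simp add: sums_iff)
  then show ?thesis by (simp add: divide_le_eq mult.commute)
qed

lemma binomial_choose_two_le: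
  "real (n choose s) * real ((s choose 2) choose s) \<le> (exp 2 * real n) ^ s"
proof -
  have "s choose 2 \<le> s * s"
    using two_mult_choose_two[of s] mult_le_mono2[of "s - 1" s s] by linarith
  then have "((s choose 2) choose s) * fact s \<le> ((s * s) choose s) * fact s"
    by (simp add: binomial_right_mono)
  also have "\<dots> \<le> (s * s) ^ s" by (rule binomial_fact_pow)
  finally have b: "real ((s choose 2) choose s) * fact s \<le> real s ^ s * real s ^ s"
    by (metis of_nat_fact of_nat_le_iff of_nat_mult of_nat_power power_mult_distrib)
  have a: "real (n choose s) * fact s \<le> real n ^ s"
    using binomial_fact_pow[of n s] by (metis of_nat_fact of_nat_le_iff of_nat_mult of_nat_power)
  have "(real (n choose s) * real ((s choose 2) choose s)) * (fact s * fact s)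
      = (real (n choose s) * fact s) * (real ((s choose 2) choose s) * fact s)" by (simp add: mult_ac)
  also have "\<dots> \<le> real n ^ s * (real s ^ s * real s ^ s)"
    by (rule mult_mono[OF a b]) simp_all
  also have "\<dots> \<le> real n ^ s * ((exp (real s) * fact s) * (exp (real s) * fact s))"
    using power_le_exp_mult_fact[of "real s" s] by (intro mult_left_mono mult_mono) simp_all
  also have "\<dots> = (exp 2 * real n) ^ s * (fact s * fact s)"
    by (simp add: power_mult_distrib exp_of_nat_mult[symmetric] exp_add[symmetric] algebra_simps)
  finally show ?thesis by (simp add: mult_le_cancel_right_pos)
qed

lemma sum_power_from_three_le:
  fixes y :: real
  assumes "0 \<le> y" and "y \<le> 1 / 2"
  shows "(\<Sum>s=3..m. y ^ s) \<le> 2 * y ^ 3"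
proof (cases "m < 3")
  case False
  have "(\<Sum>s=3..m. y ^ s) = (y ^ 3 - y ^ Suc m) / (1 - y)"
    using False assms by (simp add: sum_gp)
  also have "\<dots> \<le> y ^ 3 / (1 - y)"
    using assms by (intro divide_right_mono) simp_all
  also have "\<dots> \<le> 2 * y ^ 3"
    using assms mult_right_mono[of "2 * y" 1 "y ^ 3"] by (simp add: pos_divide_le_eq algebra_simps)
  finally show ?thesis .
qed (use assms in simp)

section \<open>The fraction of non-peelable vertex sets\<close>

lemma card_C0_lower_bound: "real n * (real n - 1) \<le> 2 * real (card (C0 n))"
proof -
  have "n * (n - 1) \<le> 2 * card (C0 n)"
    using card_C0_ge[of n] two_mult_choose_two[of n] by simp
  then have "real (n * (n - 1)) \<le> real (2 * card (C0 n))" by (rule of_nat_mono)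
  then show ?thesis by (cases n) (simp_all add: algebra_simps)
qed

lemma linear_bound_of_quadratic_bound:
  assumes "4 \<le> n" and "real n * (real n - 1) \<le> 2 * real N"
  shows "3 * real n \<le> 2 * real N"
proof -
  have "3 * real n \<le> real n * (real n - 1)"
    using assms(1) mult_left_mono[of 3 "real n - 1" "real n"] by (simp add: mult.commute)
  then show ?thesis using assms(2) by linarith
qed

lemma non_pair_term_le:
  assumes "1 \<le> k" and "4 \<le> n" and "2 * k \<le> n" and N: "real n * (real n - 1) \<le> 2 * real N"
  shows "real ((2 * n + 1) * ((N - 1) choose (2 * k - 1)))
           \<le> real (N choose (2 * k)) * (12 * real k / real n)"
proof -
  have "2 * k \<le> N" "0 < N" using linear_bound_of_quadratic_bound[OF assms(2) N] assms(2,3) by linarith+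
  have "(real (2 * n + 1) * real (2 * k)) * real n = (2 * real k * real n) * (2 * real n + 1)"
    by (simp add: algebra_simps)
  also have "\<dots> \<le> (2 * real k * real n) * (3 * (real n - 1))"
    using assms(2) by (intro mult_left_mono) simp_all
  also have "\<dots> = 6 * real k * (real n * (real n - 1))" by (simp add: algebra_simps)
  also have "\<dots> \<le> 6 * real k * (2 * real N)" using N by (intro mult_left_mono) simp_all
  finally have ratio: "real (2 * n + 1) * (real (2 * k) / real N) \<le> 12 * real k / real n"
    using \<open>0 < N\<close> assms(2) by (simp add: divide_simps)
  have "real ((2 * n + 1) * ((N - 1) choose (2 * k - 1)))
      \<le> real (2 * n + 1) * (real (N choose (2 * k)) * (real (2 * k) / real N))"
    using binomial_diff_le[of 1 "2 * k" N] assms(1) \<open>2 * k \<le> N\<close> \<open>0 < N\<close>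
    unfolding of_nat_mult by (intro mult_left_mono) simp_all
  also have "\<dots> = real (N choose (2 * k)) * (real (2 * n + 1) * (real (2 * k) / real N))"
    by (simp only: mult_ac)
  also have "\<dots> \<le> real (N choose (2 * k)) * (12 * real k / real n)"
    using ratio by (rule mult_left_mono) simp
  finally show ?thesis .
qed

lemma exp_two_le_nine: "exp (2 :: real) \<le> 9"
proof -
  have "exp (2 :: real) = exp 1 * exp 1" by (simp flip: exp_add)
  also have "\<dots> \<le> 3 * 3" using exp_le by (intro mult_mono) simp_all
  finally show ?thesis by simp
qed

lemma dense_core_ratio_le:
  assumes "4 \<le> n" and "0 < N" and N: "real n * (real n - 1) \<le> 2 * real N"
  shows "exp 2 * real n * (real (2 * k) / real N) \<le> 54 * real k / real n"
proof -
  have "real n * real (2 * k) * real n = (2 * real k * real n) * real n" by simp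
  also have "\<dots> \<le> (2 * real k * real n) * (3 / 2 * (real n - 1))"
    using assms(1) by (intro mult_left_mono) simp_all
  also have "\<dots> = 3 * real k * (real n * (real n - 1))" by (simp add: algebra_simps)
  also have "\<dots> \<le> 3 * real k * (2 * real N)" using N by (intro mult_left_mono) simp_all
  finally have "real n * (real (2 * k) / real N) \<le> 6 * real k / real n"
    using assms(1,2) by (simp add: divide_simps)
  then have "exp 2 * (real n * (real (2 * k) / real N)) \<le> 9 * (6 * real k / real n)"
    using exp_two_le_nine by (intro mult_mono) simp_all
  then show ?thesis by (simp add: mult.assoc)
qed

lemma dense_core_summand_le:
  assumes "4 \<le> n" and "s \<le> 2 * k" and "2 * k \<le> N" and N: "real n * (real n - 1) \<le> 2 * real N"
  shows "real (n choose s) * real ((s choose 2) choose s) * real ((N - s) choose (2 * k - s))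
           \<le> real (N choose (2 * k)) * (54 * real k / real n) ^ s"
proof -
  have "0 < N" using linear_bound_of_quadratic_bound[OF assms(1) N] assms(1) by linarith
  have "real (n choose s) * real ((s choose 2) choose s) * real ((N - s) choose (2 * k - s))
      \<le> (exp 2 * real n) ^ s * (real (N choose (2 * k)) * (real (2 * k) / real N) ^ s)"
    using binomial_choose_two_le binomial_diff_le[of s "2 * k" N] assms(2,3) \<open>0 < N\<close>
    by (intro mult_mono) simp_all
  also have "\<dots> = real (N choose (2 * k)) * (exp 2 * real n * (real (2 * k) / real N)) ^ s"
    by (simp only: power_mult_distrib mult_ac)
  also have "\<dots> \<le> real (N choose (2 * k)) * (54 * real k / real n) ^ s"
    using dense_core_ratio_le[OF assms(1) \<open>0 < N\<close> N]
    by (intro mult_left_mono power_mono) simp_all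
  finally show ?thesis .
qed

lemma dense_core_term_le:
  assumes "4 \<le> n" and "1000 * k \<le> n" and N: "real n * (real n - 1) \<le> 2 * real N"
  shows "real (\<Sum>s=3..2 * k. (n choose s) * (((s choose 2) choose s) * ((N - s) choose (2 * k - s))))
           \<le> real (N choose (2 * k)) * (9 * real k / real n)"
proof -
  define y where "y = 54 * real k / real n"
  have "2 * k \<le> N" using linear_bound_of_quadratic_bound[OF assms(1) N] assms(1,2) by linarith
  have "1000 * real k \<le> real n" using assms(2) by (metis of_nat_le_iff of_nat_mult of_nat_numeral)
  then have "real k / real n \<le> 1 / 1000" and "0 \<le> y" and "y \<le> 1 / 2"
    unfolding y_def using assms(1) by (simp_all add: divide_simps)
  have "real (\<Sum>s=3..2 * k. (n choose s) * (((s choose 2) choose s) * ((N - s) choose (2 * k - s))))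
      \<le> (\<Sum>s=3..2 * k. real (N choose (2 * k)) * y ^ s)"
    unfolding of_nat_sum y_def
    using dense_core_summand_le[OF assms(1) _ \<open>2 * k \<le> N\<close> N] by (intro sum_mono) (simp add: mult.assoc)
  also have "\<dots> \<le> real (N choose (2 * k)) * (2 * y ^ 3)"
    using sum_power_from_three_le[OF \<open>0 \<le> y\<close> \<open>y \<le> 1 / 2\<close>]
    by (simp add: sum_distrib_left[symmetric] mult_left_mono)
  also have "\<dots> \<le> real (N choose (2 * k)) * (9 * real k / real n)"
  proof (rule mult_left_mono)
    have "314928 * (real k / real n) ^ 2 \<le> 9"
      using power_mono[OF \<open>real k / real n \<le> 1 / 1000\<close>, of 2] by (simp add: power_divide)
    then have "314928 * (real k / real n) ^ 2 * (real k / real n) \<le> 9 * (real k / real n)"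
      by (rule mult_right_mono) simp
    then show "2 * y ^ 3 \<le> 9 * real k / real n"
      unfolding y_def by (simp add: power_divide power3_eq_cube power2_eq_square)
  qed simp
  finally show ?thesis .
qed

lemma peelable_fraction_ge:
  assumes "1 \<le> k" and "4 \<le> n" and "1000 * k \<le> n"
  shows "1 - 21 * real k / real n
           \<le> real (card {U. U \<subseteq> C0 n \<and> card U = 2 * k \<and> peelable U})
             / real (card {U. U \<subseteq> C0 n \<and> card U = 2 * k})"
proof -
  define N where "N = card (C0 n)"
  let ?All = "{U. U \<subseteq> C0 n \<and> card U = 2 * k}"
  let ?Good = "{U. U \<subseteq> C0 n \<and> card U = 2 * k \<and> peelable U}"
  let ?Bad = "{U. U \<subseteq> C0 n \<and> card U = 2 * k \<and> \<not> peelable U}"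
  have N: "real n * (real n - 1) \<le> 2 * real N" unfolding N_def by (rule card_C0_lower_bound)
  have "2 * k \<le> N" using linear_bound_of_quadratic_bound[OF assms(2) N] assms(2,3) by linarith
  have card_All: "card ?All = N choose (2 * k)" unfolding N_def by (simp add: n_subsets finite_C0)
  have C_pos: "real (N choose (2 * k)) > 0" using \<open>2 * k \<le> N\<close> by simp
  have "card ?All = card ?Good + card ?Bad"
  proof -
    have "finite ?All" by (rule finite_subset[of _ "Pow (C0 n)"]) (auto simp: finite_C0)
    moreover have "?All = ?Good \<union> ?Bad" by blast
    ultimately show ?thesis by (simp add: card_Un_disjoint disjoint_iff)
  qed
  then have Good: "real (card ?Good) = real (N choose (2 * k)) - real (card ?Bad)"
    unfolding card_All by simp
  have Bad: "real (card ?Bad) \<le> real (N choose (2 * k)) * (21 * real k / real n)"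
  proof -
    have "card ?Bad \<le> (2 * n + 1) * ((N - 1) choose (2 * k - 1))
        + (\<Sum>s=3..2 * k. (n choose s) * (((s choose 2) choose s) * ((N - s) choose (2 * k - s))))"
      unfolding N_def using card_not_peelable_le[of "2 * k" n] assms by simp
    then have "real (card ?Bad) \<le> real ((2 * n + 1) * ((N - 1) choose (2 * k - 1)))
        + real (\<Sum>s=3..2 * k. (n choose s) * (((s choose 2) choose s) * ((N - s) choose (2 * k - s))))"
      by (simp only: of_nat_add[symmetric] of_nat_le_iff)
    also have "\<dots> \<le> real (N choose (2 * k)) * (12 * real k / real n)
        + real (N choose (2 * k)) * (9 * real k / real n)"
      using non_pair_term_le[OF assms(1,2) _ N] dense_core_term_le[OF assms(2,3) N] assms(3)
      by (intro add_mono) simp_all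
    also have "\<dots> = real (N choose (2 * k)) * (21 * real k / real n)" by (simp add: algebra_simps)
    finally show ?thesis .
  qed
  have "real (card ?Good) / real (card ?All) = 1 - real (card ?Bad) / real (N choose (2 * k))"
    unfolding Good card_All using C_pos by (simp add: diff_divide_distrib)
  moreover have "real (card ?Bad) / real (N choose (2 * k)) \<le> 21 * real k / real n"
    using Bad C_pos by (simp add: pos_divide_le_eq mult.commute)
  ultimately show ?thesis by linarith
qed

lemma cond_prob_def0_paired_ge:
  assumes "1 \<le> k" and "4 \<le> n" and "1000 * k \<le> n" and "0 < p" and "p < 1"
  shows "1 - 21 * real k / real n \<le> cond_prob_def0_paired n p k"
proof -
  have "3 * real n \<le> 2 * real (card (C0 n))"
    using linear_bound_of_quadratic_bound[OF assms(2) card_C0_lower_bound] .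
  moreover have "real (2 * k) \<le> real n" using assms(3) by simp
  ultimately have "2 * k \<le> card (C0 n)" by linarith
  then show ?thesis
    using order.trans[OF peelable_fraction_ge[OF assms(1-3)] cond_prob_ge_peelable_fraction[OF assms(4,5)]]
    by blast
qed

lemma eventually_cond_prob_def0_paired_ge:
  assumes "\<forall>n. 0 < k n" and "(\<lambda>n. real (k n) / real n) \<longlonglongrightarrow> 0" and "\<forall>n. 0 < p n \<and> p n < 1"
  shows "\<forall>\<^sub>F n in sequentially. 0 \<le> 1 - 21 * real (k n) / real n
           \<and> 1 - 21 * real (k n) / real n \<le> cond_prob_def0_paired n (p n) (k n)"
proof -
  have "\<forall>\<^sub>F n in sequentially. real (k n) / real n < 1 / 1000"
    using assms(2) by (rule order_tendstoD) simp
  moreover have "\<forall>\<^sub>F n in sequentially. 4 \<le> n" by (rule eventually_ge_at_top)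
  ultimately show ?thesis
  proof eventually_elim
    case (elim n)
    then have "real (k n) * 1000 < real n" by (simp add: divide_simps)
    then have "1000 * k n \<le> n" and "21 * real (k n) / real n \<le> 1"
      using elim by (simp_all add: divide_simps)
    then show ?case
      using cond_prob_def0_paired_ge elim assms(1,3) by (simp add: Suc_le_eq)
  qed
qed

theorem mainTheorem10:
  fixes k :: "nat \<Rightarrow> nat" and p :: "nat \<Rightarrow> real"
  assumes "\<forall>n. 0 < k n"
    and "(\<lambda>n. real (k n) / real n) \<longlonglongrightarrow> 0"
    and "\<forall>n. 0 < p n \<and> p n < 1"
  shows "\<exists>c>0. \<forall>\<^sub>F n in sequentially.
           cond_prob_def0_paired n (p n) (k n)
             \<ge> (1 - c * real (k n) ^ 4 / real n ^ 4) * (1 - 21 * real (k n) / real n)"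
proof (intro exI[of _ 1] conjI)
  show "\<forall>\<^sub>F n in sequentially. cond_prob_def0_paired n (p n) (k n)
      \<ge> (1 - 1 * real (k n) ^ 4 / real n ^ 4) * (1 - 21 * real (k n) / real n)"
    using eventually_cond_prob_def0_paired_ge[OF assms]
  proof eventually_elim
    case (elim n)
    then show ?case
      using mult_right_mono[of "1 - 1 * real (k n) ^ 4 / real n ^ 4" 1 "1 - 21 * real (k n) / real n"]
      by simp
  qed
qed simp

end
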